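(* For any rational number $t$ with $1/2 < t \le 1$, there exist no minimally $t$-tough chordal graphs.
   Context: All graphs are finite, simple and undirected. A graph is chordal if it contains no induced cycle of length at least $4$. $\omega(H)$ denotes the number of components of $H$. A cutset of $G$ is a vertex set $S$ with $G-S$ disconnected. For positive real $t$, $G$ is $t$-tough if $\omega(G-S)\le |S|/t$ for every cutset $S$; the toughness $\tau(G)$ is the largest such $t$, with $\tau(K_n)=\infty$ for all $n\ge1$. $G$ is minimally $t$-tough if $\tau(G)=t$ and $\tau(G-e)<t$ for every edge $e$ of $G$. *)

theory Defs
  imports Complex_Main "HOL-Library.Extended_Real"
begin

definition simple_graph :: "'a set \<Rightarrow> 'a set set \<Rightarrow> bool" where
  "simple_graph V E \<longleftrightarrow> finite V \<and>
     (\<forall>e\<in>E. \<exists>u v. e = {u, v} \<and> u \<noteq> v \<and> u \<in> V \<and> v \<in> V)"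

definition induced_edges :: "'a set set \<Rightarrow> 'a set \<Rightarrow> 'a set set" where
  "induced_edges E W = {e \<in> E. e \<subseteq> W}"

definition components :: "'a set \<Rightarrow> 'a set set \<Rightarrow> 'a set set" where
  "components V E = V // {(u, v). u \<in> V \<and> v \<in> V \<and>
      (\<lambda>x y. x \<in> V \<and> y \<in> V \<and> {x, y} \<in> E)\<^sup>*\<^sup>* u v}"

definition num_components :: "'a set \<Rightarrow> 'a set set \<Rightarrow> nat" where
  "num_components V E = card (components V E)"

definition cutset :: "'a set \<Rightarrow> 'a set set \<Rightarrow> 'a set \<Rightarrow> bool" where
  "cutset V E S \<longleftrightarrow> S \<subseteq> V \<and>
     num_components (V - S) (induced_edges E (V - S)) \<ge> 2"

text \<open>G is t-tough: omega(G - S) \<le> |S| / t for every cutset S (t > 0), written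
  multiplicatively.\<close>
definition tough :: "'a set \<Rightarrow> 'a set set \<Rightarrow> real \<Rightarrow> bool" where
  "tough V E t \<longleftrightarrow> (\<forall>S. cutset V E S \<longrightarrow>
      t * real (num_components (V - S) (induced_edges E (V - S))) \<le> real (card S))"

text \<open>Toughness: the largest t such that G is t-tough (\<infinity> if there is no cutset,
  e.g. for complete graphs; 0 for disconnected graphs).\<close>
definition toughness :: "'a set \<Rightarrow> 'a set set \<Rightarrow> ereal" where
  "toughness V E = Sup {ereal t | t. t \<ge> 0 \<and> tough V E t}"

definition minimally_tough :: "'a set \<Rightarrow> 'a set set \<Rightarrow> real \<Rightarrow> bool" where
  "minimally_tough V E t \<longleftrightarrow> toughness V E = ereal t \<and>
     (\<forall>e\<in>E. toughness V (E - {e}) < ereal t)"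

definition chordal :: "'a set \<Rightarrow> 'a set set \<Rightarrow> bool" where
  "chordal V E \<longleftrightarrow> \<not> (\<exists>cs. length cs \<ge> 4 \<and> distinct cs \<and> set cs \<subseteq> V \<and>
     (\<forall>i < length cs. \<forall>j < length cs.
        ({cs ! i, cs ! j} \<in> E \<longleftrightarrow>
          (j = Suc i mod length cs \<or> i = Suc j mod length cs))))"

end

theory Submission
  imports Defs
begin

text \<open>For \<open>t > 1/2\<close> a \<open>t\<close>-tough graph has no cutset of size at most one, so it is
  connected and has no cut vertex. A non-complete chordal graph has a simplicial vertex \<open>v\<close>
  (Dirac), which then has two neighbours \<open>u, w\<close>, and these are adjacent. Deleting \<open>uw\<close>
  keeps the graph \<open>t\<close>-tough: a cutset \<open>S\<close> of \<open>G - uw\<close> witnessing the contrary must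
  separate \<open>u\<close> from \<open>w\<close>, so it contains \<open>v\<close>, whose only neighbours outside \<open>S\<close> are
  \<open>u\<close> and \<open>w\<close>. If \<open>G - uw - S\<close> has \<open>k \<ge> 3\<close> components, then \<open>S - {v}\<close> is a cutset
  of \<open>G\<close> leaving at least \<open>k - 1\<close> components, which forces \<open>t > 1\<close>. If \<open>k = 2\<close>, then
  \<open>S = {v}\<close>, and since neither \<open>u\<close> nor \<open>w\<close> is a cut vertex of \<open>G\<close>, the graph is the
  triangle \<open>uvw\<close>, which is complete.\<close>

section \<open>Components of induced subgraphs\<close>

definition adj_in :: "'a set set \<Rightarrow> 'a set \<Rightarrow> 'a \<Rightarrow> 'a \<Rightarrow> bool" where
  "adj_in E W x y \<longleftrightarrow> x \<in> W \<and> y \<in> W \<and> {x, y} \<in> E"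

definition reach :: "'a set set \<Rightarrow> 'a set \<Rightarrow> 'a \<Rightarrow> 'a \<Rightarrow> bool" where
  "reach E W = (adj_in E W)\<^sup>*\<^sup>*"

definition component :: "'a set set \<Rightarrow> 'a set \<Rightarrow> 'a \<Rightarrow> 'a set" where
  "component E W x = {y. reach E W x y}"

definition connected_in :: "'a set set \<Rightarrow> 'a set \<Rightarrow> bool" where
  "connected_in E W \<longleftrightarrow> (\<forall>x\<in>W. \<forall>y\<in>W. reach E W x y)"

definition closed_in :: "'a set set \<Rightarrow> 'a set \<Rightarrow> 'a set \<Rightarrow> bool" where
  "closed_in E W X \<longleftrightarrow> (\<forall>p\<in>X. \<forall>q\<in>W. {p, q} \<in> E \<longrightarrow> q \<in> X)"

definition omega :: "'a set set \<Rightarrow> 'a set \<Rightarrow> nat" where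
  "omega E W = num_components W (induced_edges E W)"

lemma reach_refl [simp]: "reach E W x x"
  by (simp add: reach_def)

lemma reach_step: "reach E W x y \<Longrightarrow> y \<in> W \<Longrightarrow> z \<in> W \<Longrightarrow> {y, z} \<in> E \<Longrightarrow> reach E W x z"
  unfolding reach_def by (erule rtranclp.rtrancl_into_rtrancl) (simp add: adj_in_def)

lemma reach_edge: "x \<in> W \<Longrightarrow> y \<in> W \<Longrightarrow> {x, y} \<in> E \<Longrightarrow> reach E W x y"
  by (rule reach_step[OF reach_refl])

lemma reach_trans: "reach E W x y \<Longrightarrow> reach E W y z \<Longrightarrow> reach E W x z"
  unfolding reach_def by (rule rtranclp_trans)

lemma reach_sym: "reach E W x y \<Longrightarrow> reach E W y x"
proof -
  have "symp (adj_in E W)"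
    by (auto simp: symp_def adj_in_def insert_commute)
  then show "reach E W x y \<Longrightarrow> reach E W y x"
    unfolding reach_def by (rule symp_rtranclp[THEN sympD])
qed

lemma reach_commute: "reach E W x y \<longleftrightarrow> reach E W y x"
  using reach_sym by metis

lemma reach_in: "reach E W x y \<Longrightarrow> x \<in> W \<Longrightarrow> y \<in> W"
  unfolding reach_def by (induction rule: rtranclp_induct) (auto simp: adj_in_def)

lemma reach_mono: "reach E W x y \<Longrightarrow> E \<subseteq> E' \<Longrightarrow> W \<subseteq> W' \<Longrightarrow> reach E' W' x y"
  unfolding reach_def
  by (erule rtranclp_mono[THEN predicate2D, rotated]) (auto simp: adj_in_def)

lemma reach_closed: "reach E W x y \<Longrightarrow> closed_in E W X \<Longrightarrow> x \<in> X \<Longrightarrow> y \<in> X"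
  unfolding reach_def by (induction rule: rtranclp_induct) (auto simp: adj_in_def closed_in_def)

lemma reach_restrict:
  assumes "reach E W x y" "closed_in E W X" "X \<subseteq> W" "x \<in> X"
  shows "reach E X x y"
  using assms(1) unfolding reach_def
proof (induction rule: rtranclp_induct)
  case (step y z)
  then have "y \<in> X" using reach_closed[OF _ assms(2,4)] by (simp add: reach_def)
  with step.hyps(2) assms(2) have "adj_in E X y z"
    by (auto simp: adj_in_def closed_in_def)
  with step.IH show ?case by simp
qed simp

lemma component_subset: "x \<in> W \<Longrightarrow> component E W x \<subseteq> W"
  by (auto simp: component_def intro: reach_in)

lemma component_closed: "x \<in> W \<Longrightarrow> closed_in E W (component E W x)"
  by (auto simp: closed_in_def component_def intro: reach_step reach_in)

lemma connected_in_component: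
  assumes "x \<in> W"
  shows "connected_in E (component E W x)"
  unfolding connected_in_def
proof (intro ballI)
  fix p q assume p: "p \<in> component E W x" and q: "q \<in> component E W x"
  then have "reach E W p q"
    unfolding component_def by (metis mem_Collect_eq reach_sym reach_trans)
  then show "reach E (component E W x) p q"
    using component_closed[OF assms] component_subset[OF assms] p by (rule reach_restrict)
qed

lemma component_eq_iff: "component E W x = component E W y \<longleftrightarrow> reach E W x y"
proof
  assume "component E W x = component E W y"
  then show "reach E W x y"
    using reach_refl[of E W y] by (simp add: component_def set_eq_iff)
next
  assume "reach E W x y"
  then show "component E W x = component E W y"
    unfolding component_def by (blast intro: reach_trans reach_sym)
qed

lemma omega_eq_card_components: "omega E W = card (component E W ` W)"
proof -
  have "(\<lambda>x y. x \<in> W \<and> y \<in> W \<and> {x, y} \<in> induced_edges E W) = adj_in E W"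
    by (auto simp: fun_eq_iff adj_in_def induced_edges_def)
  moreover have "{(x, y). x \<in> W \<and> y \<in> W \<and> reach E W x y} `` {x} = component E W x"
    if "x \<in> W" for x
    using that by (auto simp: component_def intro: reach_in)
  then have "W // {(x, y). x \<in> W \<and> y \<in> W \<and> reach E W x y} = component E W ` W"
    unfolding quotient_def UNION_singleton_eq_range by (rule image_cong[OF refl])
  ultimately show ?thesis
    by (simp add: omega_def num_components_def components_def reach_def)
qed

lemma card_le_omega:
  assumes "finite W" "F \<subseteq> W" "\<And>x y. x \<in> F \<Longrightarrow> y \<in> F \<Longrightarrow> reach E W x y \<Longrightarrow> x = y"
  shows "card F \<le> omega E W"
  unfolding omega_eq_card_components
proof (rule card_inj_on_le)
  show "inj_on (component E W) F"
    using assms(3) by (auto simp: inj_on_def component_eq_iff)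
qed (use assms in auto)

lemma omega_ge_2:
  assumes "finite W" "\<not> connected_in E W"
  shows "2 \<le> omega E W"
proof -
  obtain x y where "x \<in> W" "y \<in> W" "\<not> reach E W x y"
    using assms(2) by (auto simp: connected_in_def)
  moreover from this have "card {x, y} \<le> omega E W"
    by (intro card_le_omega[OF assms(1)]) (auto dest: reach_sym)
  ultimately show ?thesis
    by (metis card_2_iff reach_refl)
qed

lemma omega_le_1: "connected_in E W \<Longrightarrow> omega E W \<le> 1"
proof (cases "W = {}")
  case False
  then obtain x where "x \<in> W" by blast
  moreover assume "connected_in E W"
  ultimately have "component E W ` W \<subseteq> {component E W x}"
    unfolding connected_in_def image_subset_iff by (simp add: component_eq_iff)
  then have "card (component E W ` W) \<le> card {component E W x}"
    by (rule card_mono[rotated]) simp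
  then show ?thesis
    by (simp add: omega_eq_card_components)
qed (simp add: omega_eq_card_components)

section \<open>Induced paths and chordality\<close>

definition walk_in :: "'a set set \<Rightarrow> 'a set \<Rightarrow> 'a list \<Rightarrow> bool" where
  "walk_in E X P \<longleftrightarrow> P \<noteq> [] \<and> set P \<subseteq> X \<and> successively (\<lambda>x y. {x, y} \<in> E) P"

definition induced_path :: "'a set set \<Rightarrow> 'a list \<Rightarrow> bool" where
  "induced_path E P \<longleftrightarrow> distinct P \<and>
     (\<forall>i < length P. \<forall>j < length P. {P ! i, P ! j} \<in> E \<longleftrightarrow> j = Suc i \<or> i = Suc j)"

definition induced_cycle :: "'a set set \<Rightarrow> 'a list \<Rightarrow> bool" where
  "induced_cycle E cs \<longleftrightarrow> distinct cs \<and>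
     (\<forall>i < length cs. \<forall>j < length cs.
        {cs ! i, cs ! j} \<in> E \<longleftrightarrow> j = Suc i mod length cs \<or> i = Suc j mod length cs)"

lemma chordalD: "chordal V E \<Longrightarrow> induced_cycle E cs \<Longrightarrow> set cs \<subseteq> V \<Longrightarrow> length cs < 4"
  unfolding chordal_def induced_cycle_def by (meson not_le)

lemma reach_imp_walk:
  assumes "reach E X x y" "x \<in> X"
  shows "\<exists>P. walk_in E X P \<and> hd P = x \<and> last P = y"
  using assms(1) unfolding reach_def
proof (induction rule: rtranclp_induct)
  case base
  show ?case using assms(2) by (intro exI[of _ "[x]"]) (simp add: walk_in_def)
next
  case (step y z)
  then obtain P where "walk_in E X P" "hd P = x" "last P = y" by blast
  with step.hyps(2) show ?case
    by (intro exI[of _ "P @ [z]"]) (auto simp: walk_in_def adj_in_def successively_append_iff)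
qed

lemma last_take_nth: "0 < n \<Longrightarrow> n \<le> length xs \<Longrightarrow> last (take n xs) = xs ! (n - 1)"
  using take_Suc_conv_app_nth[of "n - 1" xs] by simp

lemma walk_in_take: "walk_in E X P \<Longrightarrow> 0 < n \<Longrightarrow> walk_in E X (take n P)"
  using successively_append_iff[of _ "take n P" "drop n P"]
  by (auto simp: walk_in_def dest: in_set_takeD)

lemma walk_in_drop: "walk_in E X P \<Longrightarrow> n < length P \<Longrightarrow> walk_in E X (drop n P)"
  using successively_append_iff[of _ "take n P" "drop n P"]
  by (auto simp: walk_in_def dest: in_set_dropD)

lemma walk_in_append:
  "walk_in E X P \<Longrightarrow> walk_in E X Q \<Longrightarrow> {last P, hd Q} \<in> E \<Longrightarrow> walk_in E X (P @ Q)"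
  by (auto simp: walk_in_def successively_append_iff)

lemma walk_shortcut_chord:
  assumes "walk_in E X P" "i < j" "j < length P" "{P ! i, P ! j} \<in> E"
  shows "walk_in E X (take (Suc i) P @ drop j P)"
  using assms by (intro walk_in_append walk_in_take walk_in_drop)
    (auto simp: last_take_nth hd_drop_conv_nth)

lemma walk_shortcut_repeat:
  assumes "walk_in E X P" "0 < i" "i < j" "j < length P" "P ! i = P ! j"
  shows "walk_in E X (take i P @ drop j P)"
proof (intro walk_in_append walk_in_take walk_in_drop)
  have "{P ! (i - 1), P ! i} \<in> E"
    using assms(1-4) successively_nth[of "\<lambda>x y. {x, y} \<in> E" P "i - 1"]
    by (simp add: walk_in_def)
  then show "{last (take i P), hd (drop j P)} \<in> E"
    using assms(2-5) by (simp add: last_take_nth hd_drop_conv_nth)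
qed (use assms in auto)

lemma shortest_walk_induced_path:
  assumes loopless: "\<And>x. {x} \<notin> E"
    and P: "walk_in E X P"
    and shortest: "\<And>Q. walk_in E X Q \<Longrightarrow> hd Q = hd P \<Longrightarrow> last Q = last P \<Longrightarrow>
      length P \<le> length Q"
  shows "induced_path E P"
proof -
  have "P \<noteq> []" using P by (simp add: walk_in_def)
  have no_chord: "j = Suc i" if "i < j" "j < length P" "{P ! i, P ! j} \<in> E" for i j
  proof (rule ccontr)
    assume "j \<noteq> Suc i"
    with P that have "walk_in E X (take (Suc i) P @ drop j P)"
      by (intro walk_shortcut_chord) auto
    from shortest[OF this] show False
      using that \<open>j \<noteq> Suc i\<close> \<open>P \<noteq> []\<close> by simp
  qed
  have no_repeat: "P ! i \<noteq> P ! j" if "i < j" "j < length P" for i j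
  proof
    assume eq: "P ! i = P ! j"
    show False
    proof (cases "i = 0")
      case True
      with P that eq \<open>P \<noteq> []\<close> have "walk_in E X (drop j P)" "hd (drop j P) = hd P"
        by (auto intro: walk_in_drop simp: hd_drop_conv_nth hd_conv_nth)
      from shortest[OF this] show False
        using that by simp
    next
      case False
      with P that eq have "walk_in E X (take i P @ drop j P)"
        by (intro walk_shortcut_repeat) auto
      from shortest[OF this] show False
        using that False \<open>P \<noteq> []\<close> by simp
    qed
  qed
  have adjacent: "{P ! i, P ! Suc i} \<in> E" if "Suc i < length P" for i
    using P that successively_nth[of "\<lambda>x y. {x, y} \<in> E" P i] by (simp add: walk_in_def)
  have "distinct P"
    unfolding distinct_conv_nth by (metis no_repeat nat_neq_iff)
  moreover have "{P ! i, P ! j} \<in> E \<longleftrightarrow> j = Suc i \<or> i = Suc j"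
    if "i < length P" "j < length P" for i j
    using that loopless adjacent[of i] adjacent[of j] no_chord[of i j] no_chord[of j i]
    by (cases i j rule: linorder_cases) (auto simp: insert_commute)
  ultimately show ?thesis
    by (simp add: induced_path_def)
qed

lemma reach_imp_induced_path:
  assumes "\<And>x. {x} \<notin> E" "reach E X x y" "x \<in> X"
  shows "\<exists>P. induced_path E P \<and> P \<noteq> [] \<and> set P \<subseteq> X \<and> hd P = x \<and> last P = y"
proof -
  let ?walk = "\<lambda>P. walk_in E X P \<and> hd P = x \<and> last P = y"
  obtain P0 where "?walk P0"
    using reach_imp_walk[OF assms(2,3)] by blast
  then obtain P where "?walk P" and shortest: "\<And>Q. ?walk Q \<Longrightarrow> length P \<le> length Q"
    using ex_has_least_nat[of ?walk P0 length] by blast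
  then have "induced_path E P"
    by (intro shortest_walk_induced_path[OF assms(1)]) auto
  with \<open>?walk P\<close> show ?thesis
    by (auto simp: walk_in_def)
qed

lemma induced_cycle_Cons:
  assumes loopless: "\<And>x. {x} \<notin> E"
    and P: "induced_path E P" "3 \<le> length P" "a \<notin> set P"
    and a_adj: "\<And>x. x \<in> set P \<Longrightarrow> {a, x} \<in> E \<longleftrightarrow> x = hd P \<or> x = last P"
  shows "induced_cycle E (a # P)"
proof -
  define n where "n = length (a # P)"
  have succ_mod: "Suc k mod n = (if Suc k = n then 0 else Suc k)" if "k < n" for k
    using that by auto
  have "distinct P" using P(1) by (simp add: induced_path_def)
  have a_adj_nth: "{a, P ! k} \<in> E \<longleftrightarrow> k = 0 \<or> Suc k = length P" if "k < length P" for k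
  proof -
    have "P ! k = hd P \<longleftrightarrow> k = 0" "P ! k = last P \<longleftrightarrow> Suc k = length P"
      using that P(2) \<open>distinct P\<close>
      by (auto simp: hd_conv_nth last_conv_nth nth_eq_iff_index_eq simp flip: length_greater_0_conv)
    then show ?thesis
      using a_adj[of "P ! k"] that by simp
  qed
  have "{(a # P) ! i, (a # P) ! j} \<in> E \<longleftrightarrow> j = Suc i mod n \<or> i = Suc j mod n"
    if "i < n" "j < n" for i j
  proof (cases i; cases j)
    fix i' j' assume "i = Suc i'" "j = Suc j'"
    then show ?thesis
      using that P(1) succ_mod[of i] succ_mod[of j] by (auto simp: induced_path_def n_def)
  qed (use that loopless P(2) a_adj_nth succ_mod in \<open>auto simp: n_def insert_commute\<close>)
  then show ?thesis
    using P(1,3) by (simp add: induced_cycle_def induced_path_def n_def)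
qed

text \<open>A shortest \<open>s1\<close>--\<open>s2\<close> path through \<open>C\<close>, closed up by \<open>a\<close>, would be a chordless
  cycle of length at least 4.\<close>
lemma chordal_common_neighbours_adjacent:
  assumes chordal: "chordal V E" and loopless: "\<And>x. {x} \<notin> E"
    and C: "C \<subseteq> V" "connected_in E C" "c1 \<in> C" "c2 \<in> C"
    and a: "a \<in> V" "a \<notin> C" "\<And>c. c \<in> C \<Longrightarrow> {a, c} \<notin> E"
    and s: "s1 \<in> V" "s2 \<in> V" "s1 \<notin> C" "s2 \<notin> C" "s1 \<noteq> s2"
      "{a, s1} \<in> E" "{a, s2} \<in> E" "{s1, c1} \<in> E" "{c2, s2} \<in> E"
  shows "{s1, s2} \<in> E"
proof (rule ccontr)
  assume non_adj: "{s1, s2} \<notin> E"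
  define Y where "Y = insert s1 (insert s2 C)"
  have "reach E C c1 c2"
    using C(2-4) by (simp add: connected_in_def)
  then have "reach E Y s1 c1" "reach E Y c1 c2" "reach E Y c2 s2"
    using reach_mono[of E C c1 c2 E Y] C(3,4) s(8,9)
    by (auto simp: Y_def intro: reach_edge)
  then have "reach E Y s1 s2"
    by (blast intro: reach_trans)
  then obtain P where P: "induced_path E P" "P \<noteq> []" "set P \<subseteq> Y" "hd P = s1" "last P = s2"
    using reach_imp_induced_path[OF loopless] by (metis Y_def insertI1)
  have "length P \<noteq> 1"
    using P(2,4,5) s(5) by (cases P) auto
  moreover have "length P \<noteq> 2"
  proof
    assume "length P = 2"
    then have "{P ! 0, P ! 1} \<in> E" "P ! 0 = s1" "P ! 1 = s2"
      using P by (auto simp: induced_path_def hd_conv_nth last_conv_nth)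
    with non_adj show False by simp
  qed
  ultimately have "3 \<le> length P"
    using P(2) by (cases "length P") (auto simp: numeral_eq_Suc)
  moreover have "a \<notin> set P"
    using P(3) a(2) s(6,7) loopless by (auto simp: Y_def)
  moreover have "{a, x} \<in> E \<longleftrightarrow> x = hd P \<or> x = last P" if "x \<in> set P" for x
    using that P(3-5) a(3) s(6,7) by (auto simp: Y_def)
  ultimately have "induced_cycle E (a # P)"
    using induced_cycle_Cons[OF loopless P(1)] by blast
  moreover have "set (a # P) \<subseteq> V"
    using P(3) C(1) a(1) s(1,2) by (auto simp: Y_def)
  ultimately show False
    using chordalD[OF chordal] \<open>3 \<le> length P\<close> by fastforce
qed

section \<open>Simplicial vertices\<close>

definition simplicial :: "'a set set \<Rightarrow> 'a set \<Rightarrow> 'a \<Rightarrow> bool" where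
  "simplicial E W v \<longleftrightarrow> (\<forall>x\<in>W. \<forall>y\<in>W. {v, x} \<in> E \<longrightarrow> {v, y} \<in> E \<longrightarrow> x \<noteq> y \<longrightarrow> {x, y} \<in> E)"

lemma non_edge_dominating_clique:
  assumes clique: "\<And>s1 s2. s1 \<in> S \<Longrightarrow> s2 \<in> S \<Longrightarrow> s1 \<noteq> s2 \<Longrightarrow> {s1, s2} \<in> E"
    and "S \<subseteq> W" "x \<in> W" "z \<in> W" "x \<noteq> z" "{x, z} \<notin> E"
  obtains b c where "b \<in> W" "c \<in> W" "c \<noteq> b" "{b, c} \<notin> E"
    "\<And>s. s \<in> S \<Longrightarrow> s \<noteq> b \<Longrightarrow> {b, s} \<in> E"
proof (cases "\<exists>b\<in>S. \<exists>c\<in>W. c \<noteq> b \<and> {b, c} \<notin> E")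
  case True
  with clique assms(2) show thesis
    using that by blast
next
  case False
  then have "{x, s} \<in> E" if "s \<in> S" "s \<noteq> x" for s
    using \<open>x \<in> W\<close> that by (auto simp: insert_commute)
  with assms(3-6) show thesis
    using that[of x z] by blast
qed

text \<open>Dirac's lemma, strengthened for the induction: the component \<open>C\<close> of \<open>y\<close> among the
  non-neighbours of \<open>a\<close> has a neighbourhood \<open>S\<close> that is a clique, and a simplicial vertex of
  \<open>C \<union> S\<close> that lies in \<open>C\<close> is simplicial in \<open>W\<close>.\<close>
lemma chordal_simplicial_non_neighbour:
  assumes chordal: "chordal V E" and loopless: "\<And>x. {x} \<notin> E"
  shows "finite W \<Longrightarrow> W \<subseteq> V \<Longrightarrow> a \<in> W \<Longrightarrow> y \<in> W \<Longrightarrow> y \<noteq> a \<Longrightarrow> {a, y} \<notin> E \<Longrightarrow>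
    \<exists>v\<in>W. v \<noteq> a \<and> {a, v} \<notin> E \<and> simplicial E W v"
proof (induction "card W" arbitrary: W a y rule: less_induct)
  case less
  define U where "U = {x\<in>W. x \<noteq> a \<and> {a, x} \<notin> E}"
  define C where "C = component E U y"
  define S where "S = {s\<in>W - C. \<exists>c\<in>C. {c, s} \<in> E}"
  have "y \<in> U" using less.prems unfolding U_def by simp
  then have "C \<subseteq> U" "closed_in E U C" "connected_in E C"
    unfolding C_def by (simp_all add: component_subset component_closed connected_in_component)
  have "y \<in> C"
    by (simp add: C_def component_def)
  have C_good: "v \<in> W \<and> v \<noteq> a \<and> {a, v} \<notin> E" if "v \<in> C" for v
    using that \<open>C \<subseteq> U\<close> unfolding U_def by blast
  have S_adj: "{a, s} \<in> E \<and> s \<noteq> a" if s: "s \<in> S" for s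
  proof -
    obtain c where c: "c \<in> C" "{c, s} \<in> E" "s \<in> W" "s \<notin> C"
      using s unfolding S_def by blast
    with C_good have "s \<noteq> a"
      by (auto simp: insert_commute)
    with c \<open>closed_in E U C\<close> show ?thesis
      unfolding closed_in_def U_def by blast
  qed
  have S_clique: "{s1, s2} \<in> E" if s: "s1 \<in> S" "s2 \<in> S" "s1 \<noteq> s2" for s1 s2
  proof -
    obtain c1 c2 where c: "c1 \<in> C" "c2 \<in> C" "{s1, c1} \<in> E" "{c2, s2} \<in> E"
      using s(1,2) unfolding S_def by (auto simp: insert_commute)
    show ?thesis
      by (rule chordal_common_neighbours_adjacent[OF chordal loopless _ \<open>connected_in E C\<close> c(1,2),
            where a = a])
        (use C_good S_adj s c less.prems(2,3) in \<open>auto simp: S_def\<close>)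
  qed
  define W' where "W' = C \<union> S"
  have "W' \<subseteq> W" "a \<notin> W'"
    using C_good S_adj unfolding W'_def S_def by auto
  then have "card W' < card W" "finite W'" "W' \<subseteq> V"
    using less.prems(1-3) by (auto intro: psubset_card_mono finite_subset)
  have lift: "simplicial E W v" if "v \<in> C" "simplicial E W' v" for v
    using that unfolding simplicial_def W'_def S_def by blast
  show ?case
  proof (cases "\<forall>x\<in>W'. \<forall>z\<in>W'. x \<noteq> z \<longrightarrow> {x, z} \<in> E")
    case True
    then have "simplicial E W' y"
      by (auto simp: simplicial_def)
    then show ?thesis
      using lift C_good \<open>y \<in> C\<close> by blast
  next
    case False
    then obtain x z where xz: "x \<in> W'" "z \<in> W'" "x \<noteq> z" "{x, z} \<notin> E"
      by blast
    have "S \<subseteq> W'"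
      by (simp add: W'_def)
    obtain b c where bc: "b \<in> W'" "c \<in> W'" "c \<noteq> b" "{b, c} \<notin> E"
      and b_S: "\<And>s. s \<in> S \<Longrightarrow> s \<noteq> b \<Longrightarrow> {b, s} \<in> E"
      using non_edge_dominating_clique[OF S_clique \<open>S \<subseteq> W'\<close> xz] by blast
    obtain v where v: "v \<in> W'" "v \<noteq> b" "{b, v} \<notin> E" "simplicial E W' v"
      using less.hyps[OF \<open>card W' < card W\<close> \<open>finite W'\<close> \<open>W' \<subseteq> V\<close> bc] by blast
    with b_S have "v \<in> C"
      unfolding W'_def by blast
    with v(4) show ?thesis
      using lift C_good by blast
  qed
qed

section \<open>Toughness\<close>

lemma simple_graph_edgeD:
  "simple_graph V E \<Longrightarrow> {x, y} \<in> E \<Longrightarrow> x \<noteq> y \<and> x \<in> V \<and> y \<in> V"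
  unfolding simple_graph_def by (metis doubleton_eq_iff)

lemma simple_graph_loopless: "simple_graph V E \<Longrightarrow> {x} \<notin> E"
  using simple_graph_edgeD[of V E x x] by auto

lemma connected_in_clique:
  "(\<And>x y. x \<in> W \<Longrightarrow> y \<in> W \<Longrightarrow> x \<noteq> y \<Longrightarrow> {x, y} \<in> E) \<Longrightarrow> connected_in E W"
  unfolding connected_in_def by (metis reach_edge reach_refl)

lemma tough_iff_omega:
  "tough V E t \<longleftrightarrow> (\<forall>S \<subseteq> V. 2 \<le> omega E (V - S) \<longrightarrow> t * omega E (V - S) \<le> card S)"
  by (auto simp: tough_def cutset_def omega_def)

lemma tough_toughness:
  assumes "toughness V E = ereal t"
  shows "tough V E t"
  unfolding tough_def
proof (intro allI impI)
  fix S assume "cutset V E S"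
  define k where "k = num_components (V - S) (induced_edges E (V - S))"
  have "2 \<le> k" using \<open>cutset V E S\<close> by (simp add: cutset_def k_def)
  have "toughness V E \<le> ereal (card S / k)"
    unfolding toughness_def
  proof (rule Sup_least)
    fix x assume "x \<in> {ereal t | t. t \<ge> 0 \<and> tough V E t}"
    then obtain t' where "x = ereal t'" "tough V E t'" by blast
    with \<open>cutset V E S\<close> \<open>2 \<le> k\<close> show "x \<le> ereal (card S / k)"
      by (simp add: tough_def k_def pos_le_divide_eq)
  qed
  with assms \<open>2 \<le> k\<close> show "t * k \<le> card S"
    by (simp add: pos_le_divide_eq)
qed

lemma not_tough_if_toughness_less:
  assumes "toughness V E < ereal t" "0 \<le> t"
  shows "\<not> tough V E t"
proof
  assume "tough V E t"
  with assms(2) have "ereal t \<le> toughness V E"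
    unfolding toughness_def by (intro Sup_upper) auto
  with assms(1) show False by simp
qed

lemma cutset_if_toughness_finite:
  assumes "toughness V E = ereal t"
  shows "\<exists>S. cutset V E S"
proof (rule ccontr)
  assume "\<nexists>S. cutset V E S"
  then have "tough V E (\<bar>t\<bar> + 1)"
    by (simp add: tough_def)
  then have "ereal (\<bar>t\<bar> + 1) \<le> toughness V E"
    unfolding toughness_def by (intro Sup_upper) auto
  with assms show False by simp
qed

lemma non_adjacent_pair_if_cutset:
  assumes "cutset V E S"
  shows "\<exists>x\<in>V. \<exists>y\<in>V. x \<noteq> y \<and> {x, y} \<notin> E"
proof (rule ccontr)
  assume "\<not> ?thesis"
  then have "connected_in E (V - S)"
    by (intro connected_in_clique) blast
  with assms show False
    using omega_le_1[of E "V - S"] by (simp add: cutset_def omega_def)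
qed

lemma tough_gt_half_connected:
  assumes "tough V E t" "1/2 < t" "finite V" "S \<subseteq> V" "card S \<le> 1"
  shows "connected_in E (V - S)"
proof (rule ccontr)
  assume "\<not> connected_in E (V - S)"
  then have "2 \<le> omega E (V - S)"
    using assms(3) by (intro omega_ge_2) auto
  moreover from this have "t * omega E (V - S) \<le> card S"
    using assms(1,4) by (simp add: tough_iff_omega)
  moreover have "t * 2 \<le> t * omega E (V - S)"
    using \<open>2 \<le> omega E (V - S)\<close> assms(2) by (intro mult_left_mono) auto
  ultimately show False
    using assms(2,5) by linarith
qed

lemma two_neighbours_if_2_connected:
  assumes sg: "simple_graph V E"
    and conn: "\<And>S. S \<subseteq> V \<Longrightarrow> card S \<le> 1 \<Longrightarrow> connected_in E (V - S)"
    and v: "v \<in> V" and xy: "x \<in> V" "y \<in> V" "x \<noteq> y" "{x, y} \<notin> E"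
  shows "\<exists>u w. u \<noteq> w \<and> {v, u} \<in> E \<and> {v, w} \<in> E"
proof (rule ccontr)
  assume "\<not> ?thesis"
  then have at_most_one: "\<And>u w. {v, u} \<in> E \<Longrightarrow> {v, w} \<in> E \<Longrightarrow> u = w"
    by blast
  define N where "N = {u \<in> V. {v, u} \<in> E}"
  have "N \<subseteq> V" by (simp add: N_def)
  moreover from this have "finite N"
    using sg by (auto simp: simple_graph_def intro: finite_subset)
  then have "card N \<le> 1"
    using at_most_one by (simp add: card_le_Suc0_iff_eq N_def)
  ultimately have "connected_in E (V - N)"
    by (rule conn)
  have "v \<notin> N"
    using simple_graph_loopless[OF sg] by (simp add: N_def)
  have "closed_in E (V - N) {v}"
    unfolding closed_in_def N_def by blast
  obtain z where "z \<in> V - N" "z \<noteq> v"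
  proof (rule ccontr)
    assume "\<not> thesis"
    with that xy have "x \<in> insert v N" "y \<in> insert v N"
      by blast+
    with xy at_most_one show False
      by (auto simp: N_def insert_commute)
  qed
  with v \<open>v \<notin> N\<close> \<open>connected_in E (V - N)\<close> have "reach E (V - N) v z"
    by (simp add: connected_in_def)
  from reach_closed[OF this \<open>closed_in E (V - N) {v}\<close>] \<open>z \<noteq> v\<close> show False
    by simp
qed

section \<open>Deleting the edge between two neighbours of a simplicial vertex\<close>

lemma reach_delete_edge:
  assumes "u \<notin> W \<or> w \<notin> W \<or> reach (E - {{u, w}}) W u w"
  shows "reach (E - {{u, w}}) W = reach E W"
proof (cases "reach (E - {{u, w}}) W u w")
  case False
  with assms have "adj_in (E - {{u, w}}) W = adj_in E W"
    by (auto simp: fun_eq_iff adj_in_def doubleton_eq_iff)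
  then show ?thesis by (simp add: reach_def)
next
  case True
  have "reach (E - {{u, w}}) W x y" if "reach E W x y" for x y
    using that unfolding reach_def
  proof (induction rule: rtranclp_induct)
    case (step y z)
    have "reach (E - {{u, w}}) W y z"
    proof (cases "{y, z} = {u, w}")
      case True
      then have "(y = u \<and> z = w) \<or> (y = w \<and> z = u)"
        by (simp add: doubleton_eq_iff)
      with \<open>reach (E - {{u, w}}) W u w\<close> reach_sym[OF \<open>reach (E - {{u, w}}) W u w\<close>]
      show ?thesis
        by auto
    next
      case False
      with step.hyps(2) show ?thesis
        by (auto simp: adj_in_def intro: reach_edge)
    qed
    with step.IH show ?case
      by (simp add: reach_def)
  qed simp
  moreover have "reach E W x y" if "reach (E - {{u, w}}) W x y" for x y
    using reach_mono[OF that] by blast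
  ultimately show ?thesis
    by blast
qed

lemma omega_delete_edge:
  "u \<notin> W \<or> w \<notin> W \<or> reach (E - {{u, w}}) W u w \<Longrightarrow> omega (E - {{u, w}}) W = omega E W"
  unfolding omega_eq_card_components component_def by (subst reach_delete_edge) auto

lemma separator_of_deleted_edge:
  fixes t :: real
  assumes "tough V E t" "\<not> tough V (E - {{u, w}}) t"
  obtains S where "S \<subseteq> V" "u \<in> V - S" "w \<in> V - S" "\<not> reach (E - {{u, w}}) (V - S) u w"
    "card S < t * omega (E - {{u, w}}) (V - S)"
proof -
  from assms(2) obtain S where S: "S \<subseteq> V" "2 \<le> omega (E - {{u, w}}) (V - S)"
    "card S < t * omega (E - {{u, w}}) (V - S)"
    by (auto simp: tough_iff_omega not_le)
  moreover have "u \<in> V - S \<and> w \<in> V - S \<and> \<not> reach (E - {{u, w}}) (V - S) u w"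
  proof (rule ccontr)
    assume "\<not> ?thesis"
    then have "omega (E - {{u, w}}) (V - S) = omega E (V - S)"
      by (intro omega_delete_edge) blast
    moreover have "t * omega E (V - S) \<le> card S" if "2 \<le> omega E (V - S)"
      using assms(1) S(1) that by (simp add: tough_iff_omega)
    ultimately show False
      using S(2,3) by simp
  qed
  ultimately show thesis
    using that by blast
qed

lemma closed_in_extend:
  assumes "closed_in (E - {{u, w}}) W X" "X \<subseteq> W" "u \<notin> X" "w \<notin> X"
    and "\<And>x. x \<in> W \<Longrightarrow> {v, x} \<in> E \<Longrightarrow> x = u \<or> x = w"
  shows "closed_in E (insert v W) X"
  unfolding closed_in_def
proof (intro ballI impI)
  fix p q assume "p \<in> X" "q \<in> insert v W" "{p, q} \<in> E"
  with assms(2-5) have "q \<in> W" "{p, q} \<in> E - {{u, w}}"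
    by (auto simp: insert_commute doubleton_eq_iff)
  with assms(1) \<open>p \<in> X\<close> show "q \<in> X"
    by (auto simp: closed_in_def)
qed

lemma component_delete_edge_insert:
  assumes "x \<in> W" "u \<notin> component (E - {{u, w}}) W x" "w \<notin> component (E - {{u, w}}) W x"
    and "\<And>y. y \<in> W \<Longrightarrow> {v, y} \<in> E \<Longrightarrow> y = u \<or> y = w"
  shows "component E (insert v W) x = component (E - {{u, w}}) W x"
proof
  show "component (E - {{u, w}}) W x \<subseteq> component E (insert v W) x"
    by (auto simp: component_def intro: reach_mono)
  have closed: "closed_in E (insert v W) (component (E - {{u, w}}) W x)"
    using assms by (intro closed_in_extend[where u = u and w = w] component_closed component_subset)
  show "component E (insert v W) x \<subseteq> component (E - {{u, w}}) W x"
  proof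
    fix y assume "y \<in> component E (insert v W) x"
    then have "reach E (insert v W) x y"
      by (simp add: component_def)
    from reach_closed[OF this closed] show "y \<in> component (E - {{u, w}}) W x"
      by (simp add: component_def)
  qed
qed

lemma omega_delete_edge_le:
  assumes "finite W" "u \<in> W" "\<And>x. x \<in> W \<Longrightarrow> {v, x} \<in> E \<Longrightarrow> x = u \<or> x = w"
  shows "omega (E - {{u, w}}) W \<le> omega E (insert v W) + 1"
proof -
  define E' where "E' = E - {{u, w}}"
  define W' where "W' = insert v W"
  define R where "R = W - component E' W u - component E' W w"
  have same: "component E W' x = component E' W x" if "x \<in> R" for x
    unfolding W'_def E'_def
  proof (rule component_delete_edge_insert[OF _ _ _ assms(3)])
    show "x \<in> W" "u \<notin> component (E - {{u, w}}) W x" "w \<notin> component (E - {{u, w}}) W x"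
      using that by (auto simp: R_def component_def E'_def reach_commute[of _ _ x])
  qed
  have "component E' W ` W \<subseteq>
      insert (component E' W u) (insert (component E' W w) (component E' W ` R))"
  proof (rule image_subsetI)
    fix x assume "x \<in> W"
    then consider "reach E' W u x" | "reach E' W w x" | "x \<in> R"
      by (auto simp: R_def component_def)
    then show "component E' W x \<in>
        insert (component E' W u) (insert (component E' W w) (component E' W ` R))"
      by cases (simp_all add: component_eq_iff[THEN iffD2])
  qed
  then have "omega E' W \<le> card (insert (component E' W u)
      (insert (component E' W w) (component E' W ` R)))"
    unfolding omega_eq_card_components by (rule card_mono[rotated]) (simp add: R_def assms(1))
  also have "\<dots> \<le> card (component E' W ` R) + 2"
    using assms(1) by (simp add: card_insert_if R_def)
  also have "component E' W ` R = component E W' ` R"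
    using same by simp
  finally have "omega E' W \<le> card (component E W' ` R) + 2" .
  moreover have "card (component E W' ` R) + 1 \<le> omega E W'"
  proof -
    have "component E W' u \<noteq> component E W' x" if "x \<in> R" for x
    proof -
      have "u \<notin> component E' W x"
        using that by (simp add: R_def component_def reach_commute)
      moreover have "u \<in> component E W' u"
        by (simp add: component_def)
      ultimately show ?thesis
        using same[OF that] by auto
    qed
    then have "component E W' u \<notin> component E W' ` R"
      by blast
    then have "card (component E W' ` R) + 1 =
        card (insert (component E W' u) (component E W' ` R))"
      using assms(1) by (simp add: R_def)
    also have "\<dots> \<le> omega E W'"
      unfolding omega_eq_card_components using assms(1,2)
      by (intro card_mono) (auto simp: R_def W'_def)
    finally show ?thesis .
  qed
  ultimately show ?thesis
    by (simp add: E'_def W'_def)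
qed

lemma component_delete_edge_singleton:
  assumes "u \<in> W" "v \<notin> W" "\<And>x. x \<in> W \<Longrightarrow> {v, x} \<in> E \<Longrightarrow> x = u \<or> x = w"
    and "\<not> reach (E - {{u, w}}) W u w" "connected_in E (insert v W - {u})"
  shows "component (E - {{u, w}}) W u = {u}"
proof -
  define X where "X = component (E - {{u, w}}) W u - {u}"
  have "closed_in (E - {{u, w}}) (W - {u}) X"
    using component_closed[OF assms(1), of "E - {{u, w}}"] by (auto simp: closed_in_def X_def)
  moreover have "X \<subseteq> W - {u}" "u \<notin> X" "w \<notin> X"
    using component_subset[OF assms(1), of "E - {{u, w}}"] assms(4) by (auto simp: X_def component_def)
  ultimately have "closed_in E (insert v (W - {u})) X"
    by (rule closed_in_extend) (use assms(3) in auto)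
  moreover have "insert v (W - {u}) = insert v W - {u}"
    using assms(1,2) by auto
  ultimately have closed: "closed_in E (insert v W - {u}) X"
    by simp
  have "X = {}"
  proof (rule ccontr)
    assume "X \<noteq> {}"
    then obtain a where "a \<in> X" by blast
    with \<open>X \<subseteq> W - {u}\<close> assms(1,2) have "a \<in> insert v W - {u}" "v \<in> insert v W - {u}"
      by auto
    with assms(5) have "reach E (insert v W - {u}) a v"
      by (simp add: connected_in_def)
    from reach_closed[OF this closed \<open>a \<in> X\<close>] \<open>X \<subseteq> W - {u}\<close> assms(2) show False
      by auto
  qed
  then show ?thesis
    by (auto simp: X_def component_def)
qed

lemma simplicial_separated_neighbours:
  assumes sg: "simple_graph V E"
    and v: "simplicial E V v" "{v, u} \<in> E" "{v, w} \<in> E"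
    and W: "W \<subseteq> V" "u \<in> W" "w \<in> W" "\<not> reach (E - {{u, w}}) W u w"
  shows "v \<notin> W" and "\<And>x. x \<in> W \<Longrightarrow> {v, x} \<in> E \<Longrightarrow> x = u \<or> x = w"
proof -
  have "v \<noteq> u" "v \<noteq> w" "u \<in> V" "w \<in> V"
    using simple_graph_edgeD[OF sg] v(2,3) by blast+
  have no_detour: False if "p \<in> W" "{u, p} \<in> E" "{p, w} \<in> E" "p \<noteq> u" "p \<noteq> w" for p
  proof -
    have "reach (E - {{u, w}}) W u p" "reach (E - {{u, w}}) W p w"
      using that W(2,3) by (auto simp: doubleton_eq_iff intro!: reach_edge)
    with W(4) show False
      by (blast intro: reach_trans)
  qed
  show "v \<notin> W"
    using no_detour[of v] v(2,3) \<open>v \<noteq> u\<close> \<open>v \<noteq> w\<close> by (auto simp: insert_commute)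
  show "x = u \<or> x = w" if "x \<in> W" "{v, x} \<in> E" for x
  proof (rule ccontr)
    assume "\<not> (x = u \<or> x = w)"
    moreover from this have "{u, x} \<in> E" "{x, w} \<in> E"
      using v that W(1) \<open>u \<in> V\<close> \<open>w \<in> V\<close> unfolding simplicial_def by blast+
    ultimately show False
      using no_detour that(1) by blast
  qed
qed

lemma omega_separator_le_2:
  fixes t :: real
  assumes tough: "tough V E t" and "t \<le> 1" "finite V"
    and S: "S \<subseteq> V" "v \<in> S" "u \<in> V - S"
    and nbrs: "\<And>x. x \<in> V - S \<Longrightarrow> {v, x} \<in> E \<Longrightarrow> x = u \<or> x = w"
    and violation: "card S < t * omega (E - {{u, w}}) (V - S)"
  shows "omega (E - {{u, w}}) (V - S) \<le> 2"
proof (rule ccontr)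
  define k where "k = omega (E - {{u, w}}) (V - S)"
  assume "\<not> ?thesis"
  then have "3 \<le> k" by (simp add: k_def)
  have "0 < t * k"
    using violation unfolding k_def by linarith
  then have "0 < t"
    by (simp add: zero_less_mult_iff)
  have "V - (S - {v}) = insert v (V - S)"
    using S by auto
  moreover have "k \<le> omega E (insert v (V - S)) + 1"
    unfolding k_def using assms(3) S(3) nbrs by (intro omega_delete_edge_le) auto
  ultimately have "2 \<le> omega E (V - (S - {v}))"
    and fewer: "t * (real k - 1) \<le> t * omega E (V - (S - {v}))"
    using \<open>3 \<le> k\<close> \<open>0 < t\<close> by (auto intro!: mult_left_mono)
  moreover have "S - {v} \<subseteq> V"
    using S(1) by blast
  ultimately have "t * omega E (V - (S - {v})) \<le> card (S - {v})"
    using tough unfolding tough_iff_omega by blast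
  moreover have "card S = card (S - {v}) + 1"
    using card.remove[OF finite_subset[OF S(1) assms(3)] S(2)] by simp
  ultimately show False
    using fewer violation \<open>t \<le> 1\<close> by (simp add: k_def algebra_simps)
qed

lemma separated_by_one_vertex_triangle:
  assumes "finite V" "v \<in> V" "u \<in> V - {v}" "w \<in> V - {v}"
    and conn: "\<And>S. S \<subseteq> V \<Longrightarrow> card S \<le> 1 \<Longrightarrow> connected_in E (V - S)"
    and nbrs: "\<And>x. x \<in> V - {v} \<Longrightarrow> {v, x} \<in> E \<Longrightarrow> x = u \<or> x = w"
    and separated: "\<not> reach (E - {{u, w}}) (V - {v}) u w"
    and two: "omega (E - {{u, w}}) (V - {v}) \<le> 2"
  shows "V \<subseteq> {u, v, w}"
proof -
  define W where "W = V - {v}"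
  have V: "insert v W - {u} = V - {u}" "insert v W - {w} = V - {w}"
    using assms(2-4) by (auto simp: W_def)
  have "component (E - {{u, w}}) W u = {u}"
  proof (rule component_delete_edge_singleton)
    show "connected_in E (insert v W - {u})"
      using conn[of "{u}"] assms(3) V(1) by simp
  qed (use assms(3) nbrs separated in \<open>auto simp: W_def\<close>)
  moreover have "component (E - {{w, u}}) W w = {w}"
  proof (rule component_delete_edge_singleton)
    show "\<not> reach (E - {{w, u}}) W w u"
      using separated by (simp add: W_def insert_commute reach_commute)
    show "connected_in E (insert v W - {w})"
      using conn[of "{w}"] assms(4) V(2) by simp
  qed (use assms(4) nbrs in \<open>auto simp: W_def\<close>)
  ultimately have only_u: "reach (E - {{u, w}}) W u q \<longleftrightarrow> q = u"
      "reach (E - {{u, w}}) W q u \<longleftrightarrow> q = u"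
    and only_w: "reach (E - {{u, w}}) W w q \<longleftrightarrow> q = w"
      "reach (E - {{u, w}}) W q w \<longleftrightarrow> q = w" for q
    by (auto simp: component_def set_eq_iff insert_commute reach_commute[of _ _ q])
  have "W \<subseteq> {u, w}"
  proof
    fix p assume "p \<in> W"
    show "p \<in> {u, w}"
    proof (rule ccontr)
      assume "p \<notin> {u, w}"
      moreover have "finite W" "u \<in> W" "w \<in> W"
        using assms(1,3,4) by (simp_all add: W_def)
      ultimately have "card {u, w, p} \<le> omega (E - {{u, w}}) W"
        using \<open>p \<in> W\<close> by (intro card_le_omega) (auto simp: only_u only_w)
      moreover have "u \<noteq> w"
        using separated by auto
      ultimately show False
        using \<open>p \<notin> {u, w}\<close> two by (auto simp: W_def card_insert_if)
    qed
  qed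
  then show ?thesis
    by (auto simp: W_def)
qed

lemma tough_delete_simplicial_edge:
  fixes t :: real
  assumes sg: "simple_graph V E" and tough: "tough V E t" and t: "1/2 < t" "t \<le> 1"
    and conn: "\<And>S. S \<subseteq> V \<Longrightarrow> card S \<le> 1 \<Longrightarrow> connected_in E (V - S)"
    and xy: "x \<in> V" "y \<in> V" "x \<noteq> y" "{x, y} \<notin> E"
    and v: "v \<in> V" "simplicial E V v" "{v, u} \<in> E" "{v, w} \<in> E"
  shows "tough V (E - {{u, w}}) t"
proof (rule ccontr)
  assume "\<not> ?thesis"
  then obtain S where S: "S \<subseteq> V" "u \<in> V - S" "w \<in> V - S"
    "\<not> reach (E - {{u, w}}) (V - S) u w" "card S < t * omega (E - {{u, w}}) (V - S)"
    by (rule separator_of_deleted_edge[OF tough])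
  have "finite V"
    using sg by (simp add: simple_graph_def)
  have "v \<notin> V - S" and nbrs: "\<And>x. x \<in> V - S \<Longrightarrow> {v, x} \<in> E \<Longrightarrow> x = u \<or> x = w"
    using simplicial_separated_neighbours[OF sg v(2-4) _ S(2-4)] by auto
  with v(1) have "v \<in> S" by blast
  have two: "omega (E - {{u, w}}) (V - S) \<le> 2"
    using omega_separator_le_2[OF tough t(2) \<open>finite V\<close> S(1) \<open>v \<in> S\<close> S(2) nbrs S(5)] .
  have "finite S"
    using \<open>finite V\<close> S(1) by (rule finite_subset[rotated])
  have "t * omega (E - {{u, w}}) (V - S) \<le> 1 * 2"
    using two t by (intro mult_mono) auto
  with S(5) have "card S < 2"
    by simp
  moreover have "card S = Suc (card (S - {v}))"
    using \<open>finite S\<close> \<open>v \<in> S\<close> by (rule card.remove)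
  ultimately have "S - {v} = {}"
    using \<open>finite S\<close> by simp
  with \<open>v \<in> S\<close> have "S = {v}"
    by blast
  have "u \<noteq> w"
    using S(4) by auto
  with v(2-4) S(2,3) have "{u, w} \<in> E"
    unfolding simplicial_def by blast
  from \<open>S = {v}\<close> S(2-4) nbrs two have "V \<subseteq> {u, v, w}"
    by (intro separated_by_one_vertex_triangle[OF \<open>finite V\<close> v(1) _ _ conn]) auto
  with xy(1,2) have "x \<in> {u, v, w}" "y \<in> {u, v, w}"
    by blast+
  with xy(3,4) v(3,4) \<open>{u, w} \<in> E\<close> show False
    by (auto simp: insert_commute)
qed

theorem mainTheorem2:
  fixes V :: "'a set" and E :: "'a set set" and t :: real
  assumes "t \<in> \<rat>" and "1/2 < t" and "t \<le> 1"
    and "simple_graph V E" and "chordal V E"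
  shows "\<not> minimally_tough V E t"
proof
  assume "minimally_tough V E t"
  then have t: "toughness V E = ereal t"
    and critical: "\<And>e. e \<in> E \<Longrightarrow> toughness V (E - {e}) < ereal t"
    by (auto simp: minimally_tough_def)
  have tough: "tough V E t"
    using t by (rule tough_toughness)
  have conn: "\<And>S. S \<subseteq> V \<Longrightarrow> card S \<le> 1 \<Longrightarrow> connected_in E (V - S)"
    using tough_gt_half_connected[OF tough assms(2)] assms(4) by (simp add: simple_graph_def)
  obtain x y where xy: "x \<in> V" "y \<in> V" "x \<noteq> y" "{x, y} \<notin> E"
    using cutset_if_toughness_finite[OF t] non_adjacent_pair_if_cutset by blast
  obtain v where v: "v \<in> V" "simplicial E V v"
    using chordal_simplicial_non_neighbour[OF assms(5) simple_graph_loopless[OF assms(4)] _ _ xy(1,2)]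
      xy(3,4) assms(4) by (auto simp: simple_graph_def)
  obtain u w where uw: "{v, u} \<in> E" "{v, w} \<in> E" "u \<noteq> w"
    using two_neighbours_if_2_connected[OF assms(4) conn v(1) xy] by blast
  moreover have "u \<in> V" "w \<in> V"
    using simple_graph_edgeD[OF assms(4) uw(1)] simple_graph_edgeD[OF assms(4) uw(2)] by auto
  ultimately have "{u, w} \<in> E"
    using v(2) unfolding simplicial_def by blast
  then have "\<not> tough V (E - {{u, w}}) t"
    using assms(2) by (intro not_tough_if_toughness_less critical) auto
  moreover have "tough V (E - {{u, w}}) t"
    by (rule tough_delete_simplicial_edge[OF assms(4) tough assms(2,3) conn xy v uw(1,2)])
  ultimately show False
    by contradiction
qed

end
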